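(* Under the standing setup, if $s_1=\dots=s_n=\tfrac12$, then the Nash equilibrium of the zero-sum game in which Georgia chooses $g\in[0,\underline s]$ to minimize $f$ and Hank chooses $h\in[\overline s,1]$ to maximize $f$ is $(g^*,h^* )=(0,1)$.
   Context: Standing setup. Fix $n\in\mathbb N$ and $W=[w_{ij}]\in\mathbb R^{n\times n}$ with $w_{ij}\ge0$, $w_{ii}=0$. Let $\|W\|_\infty=\max_i\sum_j|w_{ij}|$, $\|W\|_1=\max_j\sum_i|w_{ij}|$, let $\lambda$ be the spectral radius of $W$, and assume there is $c\in\mathbb R^n$ with all entries positive and $W^\top c=\lambda c$. Fix $\beta\ge\gamma\ge0$ with $1-\max\{\|W\|_\infty,\|W\|_1\}>\max\{2\beta,4\gamma\}$. Fix $s\in[0,1]^n$, $\overline s=\max_is_i$, $\underline s=\min_is_i$. Set $\widehat c_i=c_i/\sum_jc_j$, $\widehat s=\sum_i\widehat c_is_i$, $\chi=\sum_i\widehat c_is_i\sum_jw_{ij}$. Define $$f(g,h)=\frac{(1-2\beta+(h-g)\gamma)\widehat s-\chi+(h+g)\beta+(g^2-h^2)\gamma}{1-\lambda+(g-h)\gamma}\,c^\top\mathbf 1$$ (the centrality-weighted steady state of the opinion dynamics with source opinions $g,h$). *)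

theory Defs
  imports "Jordan_Normal_Form.Spectral_Radius"
begin

definition norm_inf_mat :: "real mat \<Rightarrow> real" where
  "norm_inf_mat W = (MAX i\<in>{..<dim_row W}. \<Sum>j<dim_col W. \<bar>W $$ (i,j)\<bar>)"

definition norm_one_mat :: "real mat \<Rightarrow> real" where
  "norm_one_mat W = (MAX j\<in>{..<dim_col W}. \<Sum>i<dim_row W. \<bar>W $$ (i,j)\<bar>)"

definition real_spectral_radius :: "real mat \<Rightarrow> real" where
  "real_spectral_radius W = spectral_radius (map_mat complex_of_real W)"

definition opinion_f ::
  "real mat \<Rightarrow> real vec \<Rightarrow> real \<Rightarrow> real \<Rightarrow> real vec \<Rightarrow> real \<Rightarrow> real \<Rightarrow> real" where
  "opinion_f W c \<beta> \<gamma> s g h =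
    (let n = dim_row W;
         lam = real_spectral_radius W;
         C = (\<Sum>j<n. c $ j);
         ch = (\<lambda>i. c $ i / C);
         shat = (\<Sum>i<n. ch i * s $ i);
         chi = (\<Sum>i<n. ch i * s $ i * (\<Sum>j<n. W $$ (i,j)))
     in ((1 - 2*\<beta> + (h - g)*\<gamma>) * shat - chi + (h + g)*\<beta> + (g^2 - h^2)*\<gamma>)
        / (1 - lam + (g - h)*\<gamma>) * C)"

definition zero_sum_nash :: "real set \<Rightarrow> real set \<Rightarrow> (real \<Rightarrow> real \<Rightarrow> real) \<Rightarrow> real \<Rightarrow> real \<Rightarrow> bool" where
  "zero_sum_nash G H F g h \<longleftrightarrow> g \<in> G \<and> h \<in> H \<and>
     (\<forall>g'\<in>G. F g h \<le> F g' h) \<and> (\<forall>h'\<in>H. F g h' \<le> F g h)"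

end

theory Submission
  imports Defs
begin

text \<open>With all stubbornness levels equal to 1/2 the weighted mean opinion is 1/2 and
  \<open>\<chi> = \<lambda>/2\<close>, since \<open>c\<close> is a left Perron eigenvector. Then
  \<open>f(g,h) = C/2 + C (h + g - 1)(\<beta> - (h - g)\<gamma>) / (1 - \<lambda> - (h - g)\<gamma>)\<close> with
  \<open>C = c\<^sup>T 1\<close>. The bound \<open>\<lambda> \<le> \<parallel>W\<parallel>\<^sub>\<infinity> < 1 - 4\<gamma>\<close> keeps the denominator positive, so
  the sign of the correction term is that of \<open>h + g - 1\<close>: it vanishes at \<open>(0,1)\<close>,
  is nonnegative when Hank plays 1 and nonpositive when Georgia plays 0.\<close>

lemma weighted_row_sums_eq_eigenvalue:
  fixes W :: "real mat" and c :: "real vec"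
  assumes "W \<in> carrier_mat n n" "c \<in> carrier_vec n"
    and "transpose_mat W *\<^sub>v c = \<mu> \<cdot>\<^sub>v c"
  shows "(\<Sum>i<n. c $ i * (\<Sum>j<n. W $$ (i,j))) = \<mu> * (\<Sum>j<n. c $ j)"
proof -
  have column: "(\<Sum>i<n. W $$ (i,j) * c $ i) = \<mu> * c $ j" if "j < n" for j
  proof -
    have "(\<Sum>i<n. W $$ (i,j) * c $ i) = (transpose_mat W *\<^sub>v c) $ j"
      using assms(1,2) that by (simp add: scalar_prod_def lessThan_atLeast0 mult.commute)
    also have "\<dots> = \<mu> * c $ j"
      using assms(2,3) that by simp
    finally show ?thesis .
  qed
  have "(\<Sum>i<n. c $ i * (\<Sum>j<n. W $$ (i,j))) = (\<Sum>j<n. \<Sum>i<n. W $$ (i,j) * c $ i)"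
    unfolding sum_distrib_left by (subst sum.swap) (simp add: mult.commute)
  also have "\<dots> = \<mu> * (\<Sum>j<n. c $ j)"
    using column by (simp add: sum_distrib_left)
  finally show ?thesis .
qed

lemma row_sum_le_norm_inf_mat:
  assumes "W \<in> carrier_mat n n" "\<forall>i<n. \<forall>j<n. W $$ (i,j) \<ge> 0" "i < n"
  shows "(\<Sum>j<n. W $$ (i,j)) \<le> norm_inf_mat W"
proof -
  have "(\<Sum>j<n. W $$ (i,j)) = (\<Sum>j<n. \<bar>W $$ (i,j)\<bar>)"
    using assms(2,3) by simp
  also have "\<dots> \<le> norm_inf_mat W"
    unfolding norm_inf_mat_def using assms(1,3) by (intro Max_ge) auto
  finally show ?thesis .
qed

lemma left_eigenvalue_le_norm_inf_mat:
  fixes W :: "real mat" and c :: "real vec"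
  assumes W: "W \<in> carrier_mat n n" "\<forall>i<n. \<forall>j<n. W $$ (i,j) \<ge> 0"
    and c: "c \<in> carrier_vec n" "\<forall>i<n. c $ i > 0" and "n > 0"
    and eig: "transpose_mat W *\<^sub>v c = \<mu> \<cdot>\<^sub>v c"
  shows "\<mu> \<le> norm_inf_mat W"
proof -
  have C_pos: "(\<Sum>j<n. c $ j) > 0"
    using c(2) \<open>n > 0\<close> by (intro sum_pos) auto
  have "\<mu> * (\<Sum>j<n. c $ j) = (\<Sum>i<n. c $ i * (\<Sum>j<n. W $$ (i,j)))"
    using weighted_row_sums_eq_eigenvalue[OF W(1) c(1) eig] by simp
  also have "\<dots> \<le> (\<Sum>i<n. c $ i * norm_inf_mat W)"
    using row_sum_le_norm_inf_mat[OF W] c(2)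
    by (intro sum_mono mult_left_mono) (auto intro: less_imp_le)
  also have "\<dots> = norm_inf_mat W * (\<Sum>j<n. c $ j)"
    by (simp add: sum_distrib_left mult.commute)
  finally show ?thesis using C_pos by simp
qed

definition reduced_payoff :: "real \<Rightarrow> real \<Rightarrow> real \<Rightarrow> real \<Rightarrow> real \<Rightarrow> real" where
  "reduced_payoff L \<beta> \<gamma> g h = (h + g - 1) * (\<beta> - (h - g) * \<gamma>) / (1 - L - (h - g) * \<gamma>)"

lemma reduced_payoff_denominator_pos:
  fixes g h \<gamma> L :: real
  assumes "0 \<le> g" "h \<le> 1" "0 \<le> \<gamma>" "L < 1 - \<gamma>"
  shows "1 - L - (h - g) * \<gamma> > 0"
proof -
  have "(h - g) * \<gamma> \<le> 1 * \<gamma>" using assms by (intro mult_right_mono) auto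
  with assms show ?thesis by linarith
qed

lemma reduced_payoff_nonneg_at_h1:
  fixes g \<beta> \<gamma> L :: real
  assumes "0 \<le> g" "g \<le> 1" "0 \<le> \<gamma>" "\<gamma> \<le> \<beta>" "L < 1 - \<gamma>"
  shows "reduced_payoff L \<beta> \<gamma> g 1 \<ge> 0"
proof -
  have "(1 - g) * \<gamma> \<le> 1 * \<gamma>" using assms by (intro mult_right_mono) auto
  with assms reduced_payoff_denominator_pos[of g 1 \<gamma> L] show ?thesis
    unfolding reduced_payoff_def by simp
qed

lemma reduced_payoff_nonpos_at_g0:
  fixes h \<beta> \<gamma> L :: real
  assumes "0 \<le> h" "h \<le> 1" "0 \<le> \<gamma>" "\<gamma> \<le> \<beta>" "L < 1 - \<gamma>"
  shows "reduced_payoff L \<beta> \<gamma> 0 h \<le> 0"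
proof -
  have "h * \<gamma> \<le> 1 * \<gamma>" using assms by (intro mult_right_mono) auto
  then have "(h + 0 - 1) * (\<beta> - (h - 0) * \<gamma>) \<le> 0"
    using assms by (intro mult_nonpos_nonneg) auto
  with assms reduced_payoff_denominator_pos[of 0 h \<gamma> L] show ?thesis
    unfolding reduced_payoff_def by (simp add: divide_nonpos_pos)
qed

lemma opinion_f_half_stubborn:
  fixes W :: "real mat" and c s :: "real vec"
  assumes W: "W \<in> carrier_mat n n" and c: "c \<in> carrier_vec n"
    and eig: "transpose_mat W *\<^sub>v c = real_spectral_radius W \<cdot>\<^sub>v c"
    and C_pos: "(\<Sum>j<n. c $ j) > 0"
    and s_half: "\<forall>i<n. s $ i = 1/2"
    and denom: "1 - real_spectral_radius W - (h - g) * \<gamma> \<noteq> 0"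
  shows "opinion_f W c \<beta> \<gamma> s g h =
    (\<Sum>j<n. c $ j) / 2 + reduced_payoff (real_spectral_radius W) \<beta> \<gamma> g h * (\<Sum>j<n. c $ j)"
proof -
  define L where "L = real_spectral_radius W"
  define C where "C = (\<Sum>j<n. c $ j)"
  have shat: "(\<Sum>i<n. c $ i / C * s $ i) = 1/2"
  proof -
    have "(\<Sum>i<n. c $ i / C * s $ i) = (\<Sum>i<n. c $ i) / (2 * C)"
      unfolding sum_divide_distrib by (intro sum.cong) (auto simp: s_half[rule_format])
    thus ?thesis using C_pos by (simp add: C_def)
  qed
  have chi: "(\<Sum>i<n. c $ i / C * s $ i * (\<Sum>j<n. W $$ (i,j))) = L / 2"
  proof -
    have "(\<Sum>i<n. c $ i / C * s $ i * (\<Sum>j<n. W $$ (i,j)))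
        = (\<Sum>i<n. c $ i * (\<Sum>j<n. W $$ (i,j))) / (2 * C)"
      unfolding sum_divide_distrib by (intro sum.cong) (auto simp: s_half[rule_format])
    thus ?thesis
      using weighted_row_sums_eq_eigenvalue[OF W c eig] C_pos by (simp add: C_def L_def)
  qed
  have dim: "dim_row W = n" using W by simp
  have "opinion_f W c \<beta> \<gamma> s g h =
      ((1 - 2*\<beta> + (h - g)*\<gamma>) * (1/2) - L/2 + (h + g)*\<beta> + (g^2 - h^2)*\<gamma>)
        / (1 - L + (g - h)*\<gamma>) * C"
    unfolding opinion_f_def Let_def dim C_def[symmetric] L_def[symmetric] shat chi by (rule refl)
  also have "\<dots> = C/2 + reduced_payoff L \<beta> \<gamma> g h * C"
    using denom by (simp add: reduced_payoff_def L_def field_simps power2_eq_square)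
  finally show ?thesis by (simp add: C_def L_def)
qed

lemma Min_Max_const_image:
  assumes "\<forall>i<n. s $ i = a" "n > 0"
  shows "(MIN i\<in>{..<n}. s $ i) = a" "(MAX i\<in>{..<n}. s $ i) = a"
proof -
  have "(\<lambda>i. s $ i) ` {..<n} = {a}" using assms by auto
  thus "(MIN i\<in>{..<n}. s $ i) = a" "(MAX i\<in>{..<n}. s $ i) = a" by simp_all
qed

theorem corollary3:
  fixes n :: nat and W :: "real mat" and c s :: "real vec" and \<beta> \<gamma> :: real
  assumes n_pos: "n > 0"
    and W_dim: "W \<in> carrier_mat n n"
    and W_nonneg: "\<forall>i<n. \<forall>j<n. W $$ (i,j) \<ge> 0"
    and W_diag: "\<forall>i<n. W $$ (i,i) = 0"
    and c_dim: "c \<in> carrier_vec n"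
    and c_pos: "\<forall>i<n. c $ i > 0"
    and c_eig: "transpose_mat W *\<^sub>v c = real_spectral_radius W \<cdot>\<^sub>v c"
    and beta_gamma: "\<beta> \<ge> \<gamma>" "\<gamma> \<ge> 0"
    and norm_cond: "1 - max (norm_inf_mat W) (norm_one_mat W) > max (2*\<beta>) (4*\<gamma>)"
    and s_dim: "s \<in> carrier_vec n"
    and s_range: "\<forall>i<n. 0 \<le> s $ i \<and> s $ i \<le> 1"
    and s_half: "\<forall>i<n. s $ i = 1/2"
  shows "zero_sum_nash
           {0 .. (MIN i\<in>{..<n}. s $ i)} {(MAX i\<in>{..<n}. s $ i) .. 1}
           (\<lambda>g h. opinion_f W c \<beta> \<gamma> s g h) 0 1"
proof -
  define L where "L = real_spectral_radius W"
  define C where "C = (\<Sum>j<n. c $ j)"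
  have C_pos: "C > 0"
    unfolding C_def using c_pos n_pos by (intro sum_pos) auto
  have "L \<le> norm_inf_mat W"
    unfolding L_def by (rule left_eigenvalue_le_norm_inf_mat[OF W_dim W_nonneg c_dim c_pos n_pos c_eig])
  then have L_lt: "L < 1 - \<gamma>" using norm_cond beta_gamma by linarith
  have f: "opinion_f W c \<beta> \<gamma> s g h = C / 2 + reduced_payoff L \<beta> \<gamma> g h * C"
    if "0 \<le> g" "h \<le> 1" for g h
    unfolding C_def L_def
    using reduced_payoff_denominator_pos[OF that beta_gamma(2) L_lt, unfolded L_def]
    by (intro opinion_f_half_stubborn[OF W_dim c_dim c_eig C_pos[unfolded C_def] s_half]) simp
  have f01: "opinion_f W c \<beta> \<gamma> s 0 1 = C / 2"
    using f[of 0 1] by (simp add: reduced_payoff_def)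
  show ?thesis
    unfolding zero_sum_nash_def Min_Max_const_image[OF s_half n_pos]
  proof (intro conjI ballI)
    fix g :: real assume "g \<in> {0..1/2}"
    then have "0 \<le> reduced_payoff L \<beta> \<gamma> g 1 * C"
      using reduced_payoff_nonneg_at_h1[OF _ _ beta_gamma(2,1) L_lt, of g] C_pos by simp
    then show "opinion_f W c \<beta> \<gamma> s 0 1 \<le> opinion_f W c \<beta> \<gamma> s g 1"
      using \<open>g \<in> {0..1/2}\<close> f[of g 1] f01 by simp
  next
    fix h :: real assume "h \<in> {1/2..1}"
    then have "reduced_payoff L \<beta> \<gamma> 0 h * C \<le> 0"
      using reduced_payoff_nonpos_at_g0[OF _ _ beta_gamma(2,1) L_lt, of h] C_pos
      by (simp add: mult_nonpos_nonneg)
    then show "opinion_f W c \<beta> \<gamma> s 0 h \<le> opinion_f W c \<beta> \<gamma> s 0 1"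
      using \<open>h \<in> {1/2..1}\<close> f[of 0 h] f01 by simp
  qed auto
qed

end
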